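(* Let $A\in\mathcal C$ and let $X$ be a finite independent subset of $A$. Then there is a finite independent subset $Y$ of $A$ with $X\subseteq Y$ such that $A\setminus{\rm desc}(Y)$ is finite.
   Context: Fix an integer $q\ge2$; $T=T_q$ is the digraph whose vertices are finite sequences over $\{0,\ldots,q-1\}$ with edges $(\bar w,\bar wi)$. For a digraph, an $s$-arc ($s\ge0$) from $u_0$ to $u_s$ is a sequence $u_0\ldots u_s$ with each $(u_i,u_{i+1})$ an edge and $u_{i-1}\ne u_{i+1}$ for $0<i<s$; ${\rm desc}(u)$ is the set of vertices reachable from $u$ by some $s$-arc, $s\ge0$ (including $u$), and ${\rm desc}(Y)=\bigcup_{y\in Y}{\rm desc}(y)$. A descendant-closed set $B$ (i.e. ${\rm desc}(b)\subseteq B$ for $b\in B$) is finitely generated if $B={\rm desc}(Z)$ for a finite $Z$. A subset is independent if the descendant sets of any two distinct members are disjoint. $\mathcal C$ is the class of digraphs $A$ such that ${\rm desc}(a)\cong T$ (as induced subdigraph) for every $a\in A$, $A={\rm desc}(Z)$ for some finite $Z$, and ${\rm desc}(a)\cap{\rm desc}(b)$ is finitely generated for all $a,b\in A$. *)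

theory Defs
  imports Main
begin

definition digraph :: "'a set \<Rightarrow> ('a \<times> 'a) set \<Rightarrow> bool" where
  "digraph V E \<longleftrightarrow> E \<subseteq> V \<times> V"

definition is_arc :: "('a \<times> 'a) set \<Rightarrow> 'a list \<Rightarrow> bool" where
  "is_arc E xs \<longleftrightarrow> xs \<noteq> [] \<and>
     (\<forall>i. Suc i < length xs \<longrightarrow> (xs ! i, xs ! Suc i) \<in> E) \<and>
     (\<forall>i. 0 < i \<and> Suc i < length xs \<longrightarrow> xs ! (i - 1) \<noteq> xs ! Suc i)"

definition desc :: "('a \<times> 'a) set \<Rightarrow> 'a \<Rightarrow> 'a set" where
  "desc E u = {last xs | xs. is_arc E xs \<and> hd xs = u}"

definition desc_set :: "('a \<times> 'a) set \<Rightarrow> 'a set \<Rightarrow> 'a set" where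
  "desc_set E Y = (\<Union>y\<in>Y. desc E y)"

definition fin_generated :: "('a \<times> 'a) set \<Rightarrow> 'a set \<Rightarrow> bool" where
  "fin_generated E B \<longleftrightarrow> (\<exists>Z. finite Z \<and> B = desc_set E Z)"

definition independent :: "('a \<times> 'a) set \<Rightarrow> 'a set \<Rightarrow> bool" where
  "independent E X \<longleftrightarrow> (\<forall>x\<in>X. \<forall>y\<in>X. x \<noteq> y \<longrightarrow> desc E x \<inter> desc E y = {})"

definition T_verts :: "nat \<Rightarrow> nat list set" where
  "T_verts q = {w. set w \<subseteq> {..<q}}"

definition T_edges :: "nat \<Rightarrow> (nat list \<times> nat list) set" where
  "T_edges q = {(w, w @ [i]) | w i. w \<in> T_verts q \<and> i < q}"

definition induced_iso :: "'a set \<Rightarrow> ('a \<times> 'a) set \<Rightarrow> 'b set \<Rightarrow> ('b \<times> 'b) set \<Rightarrow> bool" where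
  "induced_iso V1 E1 V2 E2 \<longleftrightarrow> (\<exists>f. bij_betw f V1 V2 \<and>
     (\<forall>x\<in>V1. \<forall>y\<in>V1. (x, y) \<in> E1 \<longleftrightarrow> (f x, f y) \<in> E2))"

definition classC :: "nat \<Rightarrow> 'a set \<Rightarrow> ('a \<times> 'a) set \<Rightarrow> bool" where
  "classC q V E \<longleftrightarrow> digraph V E \<and>
     (\<forall>a\<in>V. induced_iso (desc E a) E (T_verts q) (T_edges q)) \<and>
     (\<exists>Z. finite Z \<and> V = desc_set E Z) \<and>
     (\<forall>a\<in>V. \<forall>b\<in>V. fin_generated E (desc E a \<inter> desc E b))"

end

(*
  Write V = desc Z with Z finite and fix, for every root z in Z, an isomorphism of desc z with
  T_q; it assigns a depth to each vertex below z. For s, t in Z \<union> X the set desc s \<inter> desc t is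
  generated by finitely many vertices, so some N exceeds the depths of all these generators. Then a
  vertex v of depth at least N below z that shares a descendant w with s lies below s: w lies
  below a generator, and in the tree below z that generator is comparable with v and cannot be
  below it. Hence the vertices of depth N form a finite family whose descendant sets are nested or
  disjoint, each of them either lies below X or has descendants disjoint from desc X, and in the
  latter case it lies below a maximal such vertex. Adding these maximal vertices to X gives an
  independent set covering every vertex of depth at least N; only the finitely many vertices of
  depth below N in the finitely many trees remain.
*)
theory Submission
  imports Defs "HOL-Library.Sublist"
begin

lemma is_arc_walk: "is_arc E xs \<Longrightarrow> i < length xs \<Longrightarrow> (hd xs, xs ! i) \<in> E\<^sup>*"
  by (induction i) (auto simp: is_arc_def hd_conv_nth intro: rtrancl_into_rtrancl)

lemma is_arc_butlast:
  assumes "is_arc E xs" "2 \<le> length xs"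
  shows "is_arc E (butlast xs)" "hd (butlast xs) = hd xs"
    and "last (butlast xs) = xs ! (length xs - 2)"
proof -
  have "butlast xs \<noteq> []" using assms(2) by (cases xs) auto
  then show "is_arc E (butlast xs)" "hd (butlast xs) = hd xs"
      "last (butlast xs) = xs ! (length xs - 2)"
    using assms by (auto simp: is_arc_def nth_butlast hd_conv_nth last_conv_nth numeral_2_eq_2)
qed

lemma is_arc_snoc:
  assumes "is_arc E xs" "(last xs, w) \<in> E"
    and "2 \<le> length xs \<Longrightarrow> xs ! (length xs - 2) \<noteq> w"
  shows "is_arc E (xs @ [w])"
  unfolding is_arc_def
proof (intro conjI allI impI)
  fix i assume i: "Suc i < length (xs @ [w])"
  show "((xs @ [w]) ! i, (xs @ [w]) ! Suc i) \<in> E"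
  proof (cases "Suc i < length xs")
    case False
    then have "i = length xs - 1" using i by simp
    then show ?thesis using assms(1,2) by (auto simp: is_arc_def nth_append last_conv_nth)
  qed (use assms(1) in \<open>auto simp: is_arc_def nth_append\<close>)
next
  fix i assume i: "0 < i \<and> Suc i < length (xs @ [w])"
  show "(xs @ [w]) ! (i - 1) \<noteq> (xs @ [w]) ! Suc i"
  proof (cases "Suc i < length xs")
    case False
    then have "i - 1 = length xs - 2" "2 \<le> length xs" using i by auto
    then show ?thesis using assms(3) i by (auto simp: nth_append)
  qed (use assms(1) i in \<open>auto simp: is_arc_def nth_append\<close>)
qed simp

lemma desc_refl: "u \<in> desc E u"
  unfolding desc_def is_arc_def by (intro CollectI exI[of _ "[u]"]) auto

(* Arcs may not backtrack, but a backtracking step merely shortens the arc. *)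
lemma desc_step:
  assumes "v \<in> desc E u" "(v, w) \<in> E"
  shows "w \<in> desc E u"
proof -
  obtain xs where xs: "is_arc E xs" "hd xs = u" "last xs = v"
    using assms(1) unfolding desc_def by blast
  have "xs \<noteq> []" using xs(1) by (simp add: is_arc_def)
  show ?thesis
  proof (cases "2 \<le> length xs \<and> xs ! (length xs - 2) = w")
    case True
    then have "is_arc E (butlast xs)" "hd (butlast xs) = u" "last (butlast xs) = w"
      using is_arc_butlast[OF xs(1)] xs(2) by simp_all
    then show ?thesis unfolding desc_def by (intro CollectI exI[of _ "butlast xs"]) simp
  next
    case False
    then have "is_arc E (xs @ [w])"
      using is_arc_snoc[OF xs(1)] xs(3) assms(2) by blast
    moreover have "hd (xs @ [w]) = u" using xs(2) \<open>xs \<noteq> []\<close> by simp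
    ultimately show ?thesis unfolding desc_def by (intro CollectI exI[of _ "xs @ [w]"]) simp
  qed
qed

lemma desc_eq_rtrancl: "desc E u = {v. (u, v) \<in> E\<^sup>*}"
proof
  show "desc E u \<subseteq> {v. (u, v) \<in> E\<^sup>*}"
  proof
    fix v assume "v \<in> desc E u"
    then obtain xs where xs: "is_arc E xs" "hd xs = u" "last xs = v"
      unfolding desc_def by blast
    then have "xs \<noteq> []" by (simp add: is_arc_def)
    then show "v \<in> {v. (u, v) \<in> E\<^sup>*}"
      using is_arc_walk[OF xs(1), of "length xs - 1"] xs(2,3) by (simp add: last_conv_nth)
  qed
  show "{v. (u, v) \<in> E\<^sup>*} \<subseteq> desc E u"
  proof
    fix v assume "v \<in> {v. (u, v) \<in> E\<^sup>*}"
    then have "(u, v) \<in> E\<^sup>*" by simp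
    then show "v \<in> desc E u"
      by (induction rule: rtrancl_induct) (auto intro: desc_refl desc_step)
  qed
qed

lemma desc_trans: "x \<in> desc E z \<Longrightarrow> y \<in> desc E x \<Longrightarrow> y \<in> desc E z"
  unfolding desc_eq_rtrancl by auto

definition tree_iso :: "nat \<Rightarrow> ('a \<times> 'a) set \<Rightarrow> 'a \<Rightarrow> ('a \<Rightarrow> nat list) \<Rightarrow> bool" where
  "tree_iso q E z f \<longleftrightarrow> bij_betw f (desc E z) (T_verts q) \<and>
     (\<forall>x\<in>desc E z. \<forall>y\<in>desc E z. (x, y) \<in> E \<longleftrightarrow> (f x, f y) \<in> T_edges q)"

lemma induced_iso_desc_iff:
  "induced_iso (desc E z) E (T_verts q) (T_edges q) \<longleftrightarrow> (\<exists>f. tree_iso q E z f)"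
  unfolding induced_iso_def tree_iso_def ..

lemma classC_tree_roots:
  assumes "classC q V E"
  obtains Z f where "finite Z" "V = desc_set E Z" "Z \<subseteq> V"
    and "\<And>z. z \<in> Z \<Longrightarrow> tree_iso q E z (f z)"
proof -
  have iso_V: "\<forall>a\<in>V. \<exists>g. tree_iso q E a g" and "\<exists>Z. finite Z \<and> V = desc_set E Z"
    using assms unfolding classC_def induced_iso_desc_iff by simp_all
  then obtain Z where Z: "finite Z" and V: "V = desc_set E Z" by blast
  have ZV: "Z \<subseteq> V"
    unfolding V desc_set_def by (intro subsetI UN_I) (assumption, rule desc_refl)
  moreover obtain f where "\<And>z. z \<in> Z \<Longrightarrow> tree_iso q E z (f z)"
    using bchoice[of Z "\<lambda>z g. tree_iso q E z g"] iso_V ZV by blast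
  ultimately show ?thesis using that Z V by blast
qed

lemma tree_iso_desc_imp_prefix:
  assumes iso: "tree_iso q E z f" and "x \<in> desc E z" "y \<in> desc E x"
  shows "prefix (f x) (f y)"
proof -
  have "(x, y) \<in> E\<^sup>*" using assms(3) by (simp add: desc_eq_rtrancl)
  then show ?thesis
  proof (induction rule: rtrancl_induct)
    case (step y y')
    have "y \<in> desc E z" using assms(2) step(1) by (simp add: desc_eq_rtrancl)
    moreover have "y' \<in> desc E z" using desc_step[OF calculation step(2)] .
    ultimately have "(f y, f y') \<in> T_edges q"
      using iso step(2) unfolding tree_iso_def by blast
    then obtain i where "f y' = f y @ [i]" unfolding T_edges_def by blast
    with step(3) show ?case by (metis prefix_def append.assoc)
  qed simp
qed

lemma tree_iso_prefix_imp_desc: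
  assumes iso: "tree_iso q E z f" and x: "x \<in> desc E z"
  shows "y \<in> desc E z \<Longrightarrow> f y = f x @ r \<Longrightarrow> y \<in> desc E x"
proof (induction r arbitrary: y rule: rev_induct)
  case Nil
  have inj: "inj_on f (desc E z)" using iso unfolding tree_iso_def bij_betw_def by blast
  have "y = x" using inj_onD[OF inj _ Nil(1) x] Nil(2) by simp
  then show ?case by (simp add: desc_refl)
next
  case (snoc i r)
  have bij: "bij_betw f (desc E z) (T_verts q)" using iso unfolding tree_iso_def by blast
  have "f y \<in> T_verts q" using bij_betwE[OF bij] snoc.prems(1) by blast
  then have fp: "f x @ r \<in> T_verts q" and "i < q"
    using snoc.prems(2) unfolding T_verts_def by auto
  define p where "p = inv_into (desc E z) f (f x @ r)"
  have pz: "p \<in> desc E z" and fp_eq: "f p = f x @ r"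
    unfolding p_def using bij fp
    by (simp_all add: bij_betw_def inv_into_into f_inv_into_f)
  have "(f p, f y) \<in> T_edges q"
    unfolding T_edges_def using fp fp_eq \<open>i < q\<close> snoc.prems(2) by auto
  then have "(p, y) \<in> E" using iso pz snoc.prems(1) unfolding tree_iso_def by blast
  then show ?case using desc_step[OF snoc.IH[OF pz fp_eq]] by blast
qed

lemma tree_iso_desc_iff_prefix:
  assumes iso: "tree_iso q E z f" and "x \<in> desc E z" "y \<in> desc E z"
  shows "y \<in> desc E x \<longleftrightarrow> prefix (f x) (f y)"
proof
  show "y \<in> desc E x \<Longrightarrow> prefix (f x) (f y)"
    using tree_iso_desc_imp_prefix[OF iso assms(2)] .
  show "prefix (f x) (f y) \<Longrightarrow> y \<in> desc E x"
    using tree_iso_prefix_imp_desc[OF iso assms(2,3)] by (auto elim: prefixE)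
qed

lemma tree_iso_depth_mono:
  assumes "tree_iso q E z f" "x \<in> desc E z" "y \<in> desc E x"
  shows "length (f x) \<le> length (f y)"
  using prefix_length_le[OF tree_iso_desc_imp_prefix[OF assms]] .

lemma tree_iso_desc_antisym:
  assumes iso: "tree_iso q E z f" and x: "x \<in> desc E z" and "y \<in> desc E x" "x \<in> desc E y"
  shows "x = y"
proof -
  have y: "y \<in> desc E z" using desc_trans[OF x assms(3)] .
  have "f x = f y"
    using tree_iso_desc_imp_prefix[OF iso x assms(3)] tree_iso_desc_imp_prefix[OF iso y assms(4)]
    by (rule prefix_order.antisym)
  moreover have "inj_on f (desc E z)" using iso unfolding tree_iso_def bij_betw_def by blast
  ultimately show ?thesis using x y by (simp add: inj_on_eq_iff)
qed

lemma tree_iso_common_desc_nested: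
  assumes iso: "tree_iso q E z f" and x: "x \<in> desc E z" and y: "y \<in> desc E z"
    and "w \<in> desc E x" "w \<in> desc E y"
  shows "y \<in> desc E x \<or> x \<in> desc E y"
proof -
  have "prefix (f x) (f w)" "prefix (f y) (f w)"
    using tree_iso_desc_imp_prefix[OF iso x] tree_iso_desc_imp_prefix[OF iso y] assms(4,5) by auto
  then have "prefix (f x) (f y) \<or> prefix (f y) (f x)" by (rule prefix_same_cases)
  then show ?thesis using tree_iso_desc_iff_prefix[OF iso] x y by blast
qed

lemma tree_iso_ancestor_at_depth:
  assumes iso: "tree_iso q E z f" and v: "v \<in> desc E z" and "n \<le> length (f v)"
  obtains u where "u \<in> desc E z" "length (f u) = n" "v \<in> desc E u"
proof -
  have bij: "bij_betw f (desc E z) (T_verts q)" using iso unfolding tree_iso_def by blast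
  have "f v \<in> T_verts q" using bij_betwE[OF bij] v by blast
  then have t: "take n (f v) \<in> T_verts q"
    unfolding T_verts_def using set_take_subset by fastforce
  define u where "u = inv_into (desc E z) f (take n (f v))"
  have u: "u \<in> desc E z" and fu: "f u = take n (f v)"
    unfolding u_def using bij t by (simp_all add: bij_betw_def inv_into_into f_inv_into_f)
  have "v \<in> desc E u"
    using tree_iso_desc_iff_prefix[OF iso u v] fu take_is_prefix by simp
  then show ?thesis using that u fu assms(3) by simp
qed

lemma finite_tree_iso_depth_le:
  assumes "tree_iso q E z f"
  shows "finite {v \<in> desc E z. length (f v) \<le> n}"
proof (rule finite_imageD)
  have bij: "bij_betw f (desc E z) (T_verts q)" using assms unfolding tree_iso_def by blast
  have "f ` {v \<in> desc E z. length (f v) \<le> n} \<subseteq> {xs. set xs \<subseteq> {..<q} \<and> length xs \<le> n}"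
    using bij_betwE[OF bij] unfolding T_verts_def by auto
  then show "finite (f ` {v \<in> desc E z. length (f v) \<le> n})"
    by (rule finite_subset) (rule finite_lists_length_le, simp)
  show "inj_on f {v \<in> desc E z. length (f v) \<le> n}"
    using bij_betw_imp_inj_on[OF bij] by (rule inj_on_subset) auto
qed

lemma finite_has_maximal_above:
  assumes "finite A" "a \<in> A"
    and refl: "\<And>x. x \<in> A \<Longrightarrow> R x x"
    and trans: "\<And>x y z. x \<in> A \<Longrightarrow> y \<in> A \<Longrightarrow> z \<in> A \<Longrightarrow> R x y \<Longrightarrow> R y z \<Longrightarrow> R x z"
    and antisym: "\<And>x y. x \<in> A \<Longrightarrow> y \<in> A \<Longrightarrow> R x y \<Longrightarrow> R y x \<Longrightarrow> x = y"
  obtains m where "m \<in> A" "R a m" "\<And>b. b \<in> A \<Longrightarrow> R m b \<Longrightarrow> b = m"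
proof -
  define above where "above x = {b \<in> A. R x b}" for x
  have "\<exists>m. (m \<in> A \<and> R a m) \<and> (\<forall>y. y \<in> A \<and> R a y \<longrightarrow> card (above m) \<le> card (above y))"
    using assms(2) refl[OF assms(2)] by (intro ex_has_least_nat) simp
  then obtain m where m: "m \<in> A" "R a m"
    and least: "\<And>y. y \<in> A \<Longrightarrow> R a y \<Longrightarrow> card (above m) \<le> card (above y)"
    by blast
  have "b = m" if b: "b \<in> A" "R m b" for b
  proof (rule ccontr)
    assume "b \<noteq> m"
    have "above b \<subseteq> above m"
      unfolding above_def using trans[OF m(1) b(1) _ b(2)] by blast
    moreover have "m \<in> above m" "m \<notin> above b"
      unfolding above_def using m(1) refl[OF m(1)] antisym[OF b(1) m(1)] b(2) \<open>b \<noteq> m\<close> by auto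
    ultimately have "above b \<subset> above m" by blast
    moreover have "finite (above m)" using assms(1) unfolding above_def by simp
    ultimately have "card (above b) < card (above m)" by (simp add: psubset_card_mono)
    moreover have "R a b" using trans[OF assms(2) m(1) b(1) m(2) b(2)] .
    ultimately show False using least[OF b(1)] by simp
  qed
  then show ?thesis using that m by blast
qed

lemma deep_common_desc_imp_desc:
  assumes iso: "tree_iso q E z f" and gen: "desc E z \<inter> desc E s = desc_set E W"
    and shallow: "\<And>w'. w' \<in> W \<Longrightarrow> length (f w') < length (f v)"
    and v: "v \<in> desc E z" and w: "w \<in> desc E v" "w \<in> desc E s"
  shows "v \<in> desc E s"
proof -
  have "w \<in> desc_set E W"
    using desc_trans[OF v w(1)] w(2) gen by blast
  then obtain w' where w': "w' \<in> W" "w \<in> desc E w'"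
    unfolding desc_set_def by blast
  have "w' \<in> desc E z \<inter> desc E s"
    unfolding gen desc_set_def using w'(1) by (rule UN_I) (rule desc_refl)
  then have w'z: "w' \<in> desc E z" and w's: "w' \<in> desc E s"
    by simp_all
  have "w' \<notin> desc E v"
    using tree_iso_depth_mono[OF iso v] shallow[OF w'(1)] by (meson not_le)
  then have "v \<in> desc E w'"
    using tree_iso_common_desc_nested[OF iso v w'z w(1) w'(2)] by blast
  then show ?thesis
    using desc_trans[OF w's] by blast
qed

lemma exists_separating_depth:
  assumes "finite Z" "finite S" and iso: "\<And>z. z \<in> Z \<Longrightarrow> tree_iso q E z (f z)"
    and fg: "\<And>z s. z \<in> Z \<Longrightarrow> s \<in> S \<Longrightarrow> fin_generated E (desc E z \<inter> desc E s)"
  obtains N where "\<And>z s v w. z \<in> Z \<Longrightarrow> s \<in> S \<Longrightarrow> v \<in> desc E z \<Longrightarrow> N \<le> length (f z v) \<Longrightarrow>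
      w \<in> desc E v \<Longrightarrow> w \<in> desc E s \<Longrightarrow> v \<in> desc E s"
proof -
  have "\<forall>p\<in>Z \<times> S. \<exists>W. finite W \<and> desc E (fst p) \<inter> desc E (snd p) = desc_set E W"
    using fg unfolding fin_generated_def by auto
  then obtain W where W: "\<And>p. p \<in> Z \<times> S \<Longrightarrow>
      finite (W p) \<and> desc E (fst p) \<inter> desc E (snd p) = desc_set E (W p)"
    by metis
  have "finite (\<Union>p\<in>Z \<times> S. (\<lambda>w. length (f (fst p) w)) ` W p)"
    using assms(1,2) W by blast
  then obtain N where N: "\<And>z s w. z \<in> Z \<Longrightarrow> s \<in> S \<Longrightarrow> w \<in> W (z, s) \<Longrightarrow> length (f z w) < N"
    unfolding finite_nat_set_iff_bounded by fastforce
  show ?thesis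
  proof (rule that)
    fix z s v w assume zs: "z \<in> Z" "s \<in> S" and "v \<in> desc E z" "N \<le> length (f z v)"
      "w \<in> desc E v" "w \<in> desc E s"
    moreover have "desc E z \<inter> desc E s = desc_set E (W (z, s))" using W[of "(z, s)"] zs by simp
    ultimately show "v \<in> desc E s"
      using deep_common_desc_imp_desc[OF iso] N by (meson order_less_le_trans)
  qed
qed

locale separating_level =
  fixes q :: nat and E :: "('a \<times> 'a) set" and Z :: "'a set" and f :: "'a \<Rightarrow> 'a \<Rightarrow> nat list"
    and X :: "'a set" and N :: nat
  assumes finite_roots: "finite Z" and finite_X: "finite X"
    and tree_iso: "z \<in> Z \<Longrightarrow> tree_iso q E z (f z)"
    and independent_X: "independent E X"
    and deep_in_desc: "\<lbrakk>z \<in> Z; s \<in> Z \<union> X; v \<in> desc E z; N \<le> length (f z v);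
      w \<in> desc E v; w \<in> desc E s\<rbrakk> \<Longrightarrow> v \<in> desc E s"
begin

definition level :: "'a set" where
  "level = {v. \<exists>z\<in>Z. v \<in> desc E z \<and> length (f z v) = N}"

definition free_level :: "'a set" where
  "free_level = {v \<in> level. desc E v \<inter> desc_set E X = {}}"

definition top_free :: "'a set" where
  "top_free = {v \<in> free_level. \<forall>u\<in>free_level. v \<in> desc E u \<longrightarrow> u = v}"

lemma finite_shallow: "finite (\<Union>z\<in>Z. {v \<in> desc E z. length (f z v) \<le> N})"
  using finite_roots finite_tree_iso_depth_le[OF tree_iso] by blast

lemma finite_level: "finite level"
  by (rule finite_subset[OF _ finite_shallow]) (auto simp: level_def)

lemma level_subset_desc_set: "level \<subseteq> desc_set E Z"
  unfolding level_def desc_set_def by blast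

lemma top_free_subset_level: "top_free \<subseteq> level"
  unfolding top_free_def free_level_def by blast

lemma level_desc_antisym:
  assumes "x \<in> level" "y \<in> desc E x" "x \<in> desc E y"
  shows "x = y"
proof -
  obtain z where "z \<in> Z" "x \<in> desc E z" using assms(1) unfolding level_def by blast
  then show ?thesis using tree_iso_desc_antisym[OF tree_iso] assms(2,3) by blast
qed

lemma level_nested:
  assumes v1: "v1 \<in> level" and v2: "v2 \<in> level" and w: "w \<in> desc E v1" "w \<in> desc E v2"
  shows "v2 \<in> desc E v1 \<or> v1 \<in> desc E v2"
proof -
  obtain z1 where z1: "z1 \<in> Z" "v1 \<in> desc E z1" "length (f z1 v1) = N"
    using v1 unfolding level_def by blast
  obtain z2 where z2: "z2 \<in> Z" "v2 \<in> desc E z2"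
    using v2 unfolding level_def by blast
  have "v1 \<in> desc E z2"
    using deep_in_desc[OF z1(1) _ z1(2) _ w(1) desc_trans[OF z2(2) w(2)]] z2(1) z1(3) by simp
  then show ?thesis
    using tree_iso_common_desc_nested[OF tree_iso[OF z2(1)] _ z2(2) w] by blast
qed

lemma top_free_desc_disjoint_X:
  assumes "v \<in> top_free" "x \<in> X"
  shows "desc E v \<inter> desc E x = {}"
  using assms unfolding top_free_def free_level_def desc_set_def by blast

lemma independent_extension: "independent E (X \<union> top_free)"
  unfolding independent_def
proof (intro ballI impI)
  fix a b assume a: "a \<in> X \<union> top_free" and b: "b \<in> X \<union> top_free" and "a \<noteq> b"
  consider "a \<in> X" "b \<in> X" | "a \<in> X" "b \<in> top_free" | "a \<in> top_free" "b \<in> X"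
    | "a \<in> top_free" "b \<in> top_free"
    using a b by blast
  then show "desc E a \<inter> desc E b = {}"
  proof cases
    case 1
    then show ?thesis using independent_X \<open>a \<noteq> b\<close> unfolding independent_def by blast
  next
    case 2
    then show ?thesis using top_free_desc_disjoint_X by blast
  next
    case 3
    then show ?thesis using top_free_desc_disjoint_X by blast
  next
    case 4
    show ?thesis
    proof (rule ccontr)
      assume "desc E a \<inter> desc E b \<noteq> {}"
      then obtain w where "w \<in> desc E a" "w \<in> desc E b" by blast
      then have "b \<in> desc E a \<or> a \<in> desc E b"
        using level_nested 4 top_free_subset_level by blast
      then show False using 4 \<open>a \<noteq> b\<close> unfolding top_free_def by blast
    qed
  qed
qed

lemma free_level_below_top_free:
  assumes "u \<in> free_level"
  obtains m where "m \<in> top_free" "u \<in> desc E m"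
proof -
  have fin: "finite free_level"
    using finite_level unfolding free_level_def by simp
  have lev: "free_level \<subseteq> level" unfolding free_level_def by blast
  obtain m where m: "m \<in> free_level" "u \<in> desc E m"
    and "\<And>b. b \<in> free_level \<Longrightarrow> m \<in> desc E b \<Longrightarrow> b = m"
  proof (rule finite_has_maximal_above[OF fin assms, of "\<lambda>x y. x \<in> desc E y"])
    show "\<And>x. x \<in> desc E x" by (rule desc_refl)
    show "\<And>x y z. x \<in> desc E y \<Longrightarrow> y \<in> desc E z \<Longrightarrow> x \<in> desc E z"
      by (rule desc_trans)
    show "\<And>x y. x \<in> free_level \<Longrightarrow> x \<in> desc E y \<Longrightarrow> y \<in> desc E x \<Longrightarrow> x = y"
      using level_desc_antisym lev by blast
  qed (rule that)
  then have "m \<in> top_free" unfolding top_free_def by blast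
  then show ?thesis using that m(2) by blast
qed

lemma deep_vertex_covered:
  assumes z: "z \<in> Z" and v: "v \<in> desc E z" and "N \<le> length (f z v)"
  shows "v \<in> desc_set E (X \<union> top_free)"
proof -
  obtain u where u: "u \<in> desc E z" "length (f z u) = N" "v \<in> desc E u"
    using tree_iso_ancestor_at_depth[OF tree_iso[OF z] v assms(3)] .
  then have "u \<in> level" unfolding level_def using z by blast
  show ?thesis
  proof (cases "u \<in> free_level")
    case False
    then obtain x w where x: "x \<in> X" "w \<in> desc E u" "w \<in> desc E x"
      using \<open>u \<in> level\<close> unfolding free_level_def desc_set_def by blast
    then have "u \<in> desc E x" using deep_in_desc[OF z _ u(1) _ x(2,3)] u(2) by simp
    then show ?thesis using desc_trans[OF _ u(3)] x(1) unfolding desc_set_def by blast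
  next
    case True
    then obtain m where "m \<in> top_free" "u \<in> desc E m" by (rule free_level_below_top_free)
    then show ?thesis using desc_trans[OF _ u(3)] unfolding desc_set_def by blast
  qed
qed

lemma finite_uncovered: "finite (desc_set E Z - desc_set E (X \<union> top_free))"
proof (rule finite_subset[OF _ finite_shallow])
  show "desc_set E Z - desc_set E (X \<union> top_free) \<subseteq> (\<Union>z\<in>Z. {v \<in> desc E z. length (f z v) \<le> N})"
    using deep_vertex_covered unfolding desc_set_def[of E Z] by fastforce
qed

end

theorem lemma3p1:
  fixes q :: nat and V :: "'a set" and E :: "('a \<times> 'a) set" and X :: "'a set"
  assumes "q \<ge> 2"
    and "classC q V E"
    and "X \<subseteq> V" and "finite X" and "independent E X"
  shows "\<exists>Y. finite Y \<and> Y \<subseteq> V \<and> independent E Y \<and> X \<subseteq> Y \<and>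
             finite (V - desc_set E Y)"
proof -
  obtain Z f where Z: "finite Z" and V: "V = desc_set E Z" and ZV: "Z \<subseteq> V"
    and iso: "\<And>z. z \<in> Z \<Longrightarrow> tree_iso q E z (f z)"
    using classC_tree_roots[OF assms(2)] by blast
  have fg: "fin_generated E (desc E z \<inter> desc E s)" if "z \<in> Z" "s \<in> Z \<union> X" for z s
  proof -
    have "z \<in> V" "s \<in> V" using that ZV assms(3) by blast+
    then show ?thesis using assms(2) unfolding classC_def by blast
  qed
  have finZX: "finite (Z \<union> X)" using Z assms(4) by simp
  obtain N where deep: "\<And>z s v w. z \<in> Z \<Longrightarrow> s \<in> Z \<union> X \<Longrightarrow> v \<in> desc E z \<Longrightarrow>
      N \<le> length (f z v) \<Longrightarrow> w \<in> desc E v \<Longrightarrow> w \<in> desc E s \<Longrightarrow> v \<in> desc E s"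
    using exists_separating_depth[OF Z finZX iso fg] by metis
  interpret separating_level q E Z f X N
    using Z assms(4) iso assms(5) deep by unfold_locales
  show ?thesis
  proof (intro exI conjI)
    show "finite (X \<union> top_free)"
      using assms(4) finite_subset[OF top_free_subset_level finite_level] by blast
    show "X \<union> top_free \<subseteq> V"
      using assms(3) top_free_subset_level level_subset_desc_set unfolding V by blast
    show "finite (V - desc_set E (X \<union> top_free))" using finite_uncovered unfolding V .
  qed (use independent_extension in auto)
qed

end
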